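(* Consider the damped Newton's method, i.e. SGD with momentum $\mu\in[0,1)$ and preconditioning matrix $\Lambda:=\lambda A^{-1}$ ($\lambda>0$), on linear regression with label noise in the limit $N\to\infty$. Let $g:=2(1-\mu)-\left(\frac{1-\mu}{1+\mu}+\frac1S\right)\lambda$, and assume $g\neq0$ and $gS\neq\lambda D$. Then the model fluctuation is $$\Sigma=\frac{\lambda\sigma^2}{gS-\lambda D}A^{-1}.$$
   Context: Data: $x_i\in\mathbb{R}^D$ i.i.d. $\mathcal N(0,A)$, $A$ symmetric positive definite; $y_i=\mathbf{u}^{\mathrm T}x_i+\epsilon_i$ with $\epsilon_i$ i.i.d., independent of the $x_i$, mean $0$, variance $\sigma^2$; loss $\frac1{2N}\sum_i(\mathbf{w}^{\mathrm T}x_i-y_i)^2$, Hessian $H=A$; batch size $S$. Update: $\mathbf{m}_t=\mu\mathbf{m}_{t-1}+\hat{\mathbf{g}}_t$, $\mathbf{w}_t=\mathbf{w}_{t-1}-\Lambda\mathbf{m}_t$. The fluctuation $\Sigma:=\lim_t\mathbb{E}[(\mathbf{w}_t-\mathbf{u})(\mathbf{w}_t-\mathbf{u})^{\mathrm T}]$ satisfies $(1-\mu)(\Lambda H\Sigma+\Sigma H\Lambda)-\frac{1+\mu^2}{1-\mu^2}\Lambda H\Sigma H\Lambda+\frac{\mu}{1-\mu^2}(\Lambda H\Lambda H\Sigma+\Sigma H\Lambda H\Lambda)=\Lambda C\Lambda$ with $C=\frac1S(A\Sigma A+\mathrm{Tr}[A\Sigma]A+\sigma^2A)$. *)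

theory Defs
  imports "HOL-Analysis.Analysis"
begin

definition spd :: "real^'n^'n \<Rightarrow> bool" where
  "spd A \<longleftrightarrow> transpose A = A \<and> (\<forall>x. x \<noteq> 0 \<longrightarrow> x \<bullet> (A *v x) > 0)"

definition noise_cov :: "nat \<Rightarrow> real \<Rightarrow> real^'n^'n \<Rightarrow> real^'n^'n \<Rightarrow> real^'n^'n" where
  "noise_cov S \<sigma> A Sig =
     (1 / real S) *\<^sub>R (A ** Sig ** A + trace (A ** Sig) *\<^sub>R A + \<sigma>\<^sup>2 *\<^sub>R A)"

text \<open>The fluctuation equation characterising Sig for momentum mu, preconditioner L,
  Hessian H and noise covariance C.\<close>
definition fluct_eq :: "real \<Rightarrow> real^'n^'n \<Rightarrow> real^'n^'n \<Rightarrow> real^'n^'n \<Rightarrow> real^'n^'n \<Rightarrow> bool" where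
  "fluct_eq \<mu> L H C Sig \<longleftrightarrow>
     (1 - \<mu>) *\<^sub>R (L ** H ** Sig + Sig ** H ** L)
     - ((1 + \<mu>\<^sup>2) / (1 - \<mu>\<^sup>2)) *\<^sub>R (L ** H ** Sig ** H ** L)
     + (\<mu> / (1 - \<mu>\<^sup>2)) *\<^sub>R (L ** H ** L ** H ** Sig + Sig ** H ** L ** H ** L)
     = L ** C ** L"

end

theory Submission
  imports Defs
begin

text \<open>With the preconditioner \<open>\<Lambda> = \<lambda>A\<inverse>\<close> and Hessian \<open>H = A\<close> we have \<open>\<Lambda>H = H\<Lambda> = \<lambda>I\<close>, so every
  term on the left of the fluctuation equation collapses to a scalar multiple of \<open>\<Sigma>\<close>, while
  \<open>\<Lambda>C\<Lambda>\<close> is a combination of \<open>\<Sigma>\<close> and \<open>A\<inverse>\<close> whose second coefficient involves the scalar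
  \<open>Tr[A\<Sigma>]\<close>. Solving for \<open>\<Sigma>\<close> shows \<open>\<Sigma> = c A\<inverse>\<close>; then \<open>Tr[A\<Sigma>] = cD\<close>, and the remaining
  linear equation for \<open>c\<close> gives \<open>c = \<lambda>\<sigma>\<^sup>2 / (gS - \<lambda>D)\<close>.\<close>

lemma matrix_inv_left:
  fixes A :: "'a::semiring_1^'n^'m"
  assumes "invertible A"
  shows "matrix_inv A ** A = mat 1"
  using someI_ex[OF assms[unfolded invertible_def]] unfolding matrix_inv_def by blast

lemma matrix_inv_right:
  fixes A :: "'a::semiring_1^'n^'m"
  assumes "invertible A"
  shows "A ** matrix_inv A = mat 1"
  using someI_ex[OF assms[unfolded invertible_def]] unfolding matrix_inv_def by blast

lemma spd_invertible:
  fixes A :: "real^'n^'n"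
  assumes "spd A"
  shows "invertible A"
proof -
  have "\<forall>x. A *v x = 0 \<longrightarrow> x = 0"
    using assms unfolding spd_def by (metis inner_zero_right less_irrefl)
  then show ?thesis
    by (simp add: invertible_left_inverse matrix_left_invertible_ker)
qed

lemma matrix_add_rdistrib: "((A::'a::semiring_1^'m^'n) + B) ** C = A ** C + B ** C"
  by (vector matrix_matrix_mult_def sum.distrib[symmetric] field_simps)

lemma scaleR_mat_1_mult [simp]: "(c *\<^sub>R mat 1) ** (X::real^'m^'n) = c *\<^sub>R X"
  by (simp flip: scalar_matrix_assoc)

lemma mult_scaleR_mat_1 [simp]: "(X::real^'m^'n) ** (c *\<^sub>R mat 1) = c *\<^sub>R X"
  by (simp add: matrix_scalar_ac)

lemma trace_scaleR: "trace (c *\<^sub>R (X::real^'n^'n)) = c * trace X"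
  by (simp add: trace_def sum_distrib_left)

text \<open>No hypothesis on \<open>\<mu>\<close> is needed: at \<open>\<mu> = \<plusminus>1\<close> both sides vanish because \<open>x / 0 = 0\<close>.\<close>

lemma momentum_coefficient_identity:
  "(1 + \<mu>\<^sup>2) / (1 - \<mu>\<^sup>2) - 2 * \<mu> / (1 - \<mu>\<^sup>2) = (1 - \<mu>) / (1 + (\<mu>::real))"
proof (cases "1 - \<mu>\<^sup>2 = 0")
  case True
  then have "\<mu> = 1 \<or> \<mu> = -1"
    by (metis abs_power2 eq_iff_diff_eq_0 power2_eq_1_iff)
  then show ?thesis by auto
next
  case False
  moreover have factor: "1 - \<mu>\<^sup>2 = (1 - \<mu>) * (1 + \<mu>)"
    by (simp add: power2_eq_square algebra_simps)
  ultimately have "1 - \<mu> \<noteq> 0" by auto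
  have "(1 + \<mu>\<^sup>2) / (1 - \<mu>\<^sup>2) - 2 * \<mu> / (1 - \<mu>\<^sup>2) = ((1 - \<mu>) * (1 - \<mu>)) / ((1 - \<mu>) * (1 + \<mu>))"
    unfolding factor by (simp add: diff_divide_distrib[symmetric] power2_eq_square algebra_simps)
  also have "\<dots> = (1 - \<mu>) / (1 + \<mu>)"
    using \<open>1 - \<mu> \<noteq> 0\<close> by simp
  finally show ?thesis .
qed

lemma fluct_eq_commuting_iff:
  fixes L H Sig :: "real^'n^'n"
  assumes LH: "L ** H = lam *\<^sub>R mat 1" and HL: "H ** L = lam *\<^sub>R mat 1"
  shows "fluct_eq \<mu> L H C Sig \<longleftrightarrow>
    (lam * (2 * (1 - \<mu>) - (1 - \<mu>) / (1 + \<mu>) * lam)) *\<^sub>R Sig = L ** C ** L"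
proof -
  have left: "L ** H ** X = lam *\<^sub>R X" for X :: "real^'n^'n"
    using LH by simp
  have right: "X ** H ** L = lam *\<^sub>R X" for X :: "real^'n^'n"
    using HL by (simp flip: matrix_mul_assoc)
  define a b where "a = (1 + \<mu>\<^sup>2) / (1 - \<mu>\<^sup>2)" and "b = \<mu> / (1 - \<mu>\<^sup>2)"
  have "(1 - \<mu>) *\<^sub>R (L ** H ** Sig + Sig ** H ** L) - a *\<^sub>R (L ** H ** Sig ** H ** L)
      + b *\<^sub>R (L ** H ** L ** H ** Sig + Sig ** H ** L ** H ** L)
    = (1 - \<mu>) *\<^sub>R (lam *\<^sub>R Sig + lam *\<^sub>R Sig) - a *\<^sub>R (lam\<^sup>2 *\<^sub>R Sig)
      + b *\<^sub>R (lam\<^sup>2 *\<^sub>R Sig + lam\<^sup>2 *\<^sub>R Sig)"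
    by (simp add: left right matrix_scalar_ac power2_eq_square flip: scalar_matrix_assoc)
  also have "\<dots> = (2 * (1 - \<mu>) * lam - (a - 2 * b) * lam\<^sup>2) *\<^sub>R Sig"
    by (simp add: vec_eq_iff algebra_simps)
  also have "\<dots> = (lam * (2 * (1 - \<mu>) - (1 - \<mu>) / (1 + \<mu>) * lam)) *\<^sub>R Sig"
    unfolding a_def b_def momentum_coefficient_identity[symmetric]
    by (simp add: power2_eq_square algebra_simps)
  finally show ?thesis
    unfolding fluct_eq_def a_def b_def by simp
qed

lemma noise_cov_sandwich:
  fixes L A Sig :: "real^'n^'n"
  assumes LA: "L ** A = lam *\<^sub>R mat 1" and AL: "A ** L = lam *\<^sub>R mat 1"
  shows "L ** noise_cov S \<sigma> A Sig ** L
    = (lam\<^sup>2 / real S) *\<^sub>R Sig + (lam * (trace (A ** Sig) + \<sigma>\<^sup>2) / real S) *\<^sub>R L"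
proof -
  have "L ** (A ** Sig ** A) ** L = (L ** A) ** Sig ** (A ** L)"
    by (simp add: matrix_mul_assoc)
  then have "L ** (A ** Sig ** A) ** L = lam\<^sup>2 *\<^sub>R Sig"
    using LA AL by (simp add: power2_eq_square)
  moreover have "L ** A ** L = lam *\<^sub>R L"
    using LA by simp
  ultimately show ?thesis
    unfolding noise_cov_def
    by (simp add: matrix_add_ldistrib matrix_add_rdistrib matrix_scalar_ac scaleR_add_right
        flip: scalar_matrix_assoc) (simp add: algebra_simps add_divide_distrib scaleR_add_left)
qed

lemma trace_mult_scaled_matrix_inv:
  fixes A :: "real^'n^'n"
  assumes "invertible A"
  shows "trace (A ** (c *\<^sub>R matrix_inv A)) = c * real CARD('n)"
  using assms by (simp add: matrix_scalar_ac matrix_inv_right trace_scaleR trace_I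
      flip: scalar_matrix_assoc)

lemma damped_newton_fluct_eq_iff:
  fixes A Sig :: "real^'n^'n"
  assumes "invertible A"
  shows "fluct_eq \<mu> (lam *\<^sub>R matrix_inv A) A (noise_cov S \<sigma> A Sig) Sig \<longleftrightarrow>
    (lam * (2 * (1 - \<mu>) - ((1 - \<mu>) / (1 + \<mu>) + 1 / real S) * lam)) *\<^sub>R Sig
      = (lam\<^sup>2 * (trace (A ** Sig) + \<sigma>\<^sup>2) / real S) *\<^sub>R matrix_inv A"
proof -
  define L where "L = lam *\<^sub>R matrix_inv A"
  have LA: "L ** A = lam *\<^sub>R mat 1" and AL: "A ** L = lam *\<^sub>R mat 1"
    unfolding L_def using assms
    by (simp_all add: matrix_scalar_ac matrix_inv_left matrix_inv_right flip: scalar_matrix_assoc)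
  have "(lam * (2 * (1 - \<mu>) - (1 - \<mu>) / (1 + \<mu>) * lam)) *\<^sub>R Sig - (lam\<^sup>2 / real S) *\<^sub>R Sig
      = (lam * (2 * (1 - \<mu>) - ((1 - \<mu>) / (1 + \<mu>) + 1 / real S) * lam)) *\<^sub>R Sig"
    unfolding scaleR_diff_left[symmetric]
    by (rule arg_cong[where f = "\<lambda>r. r *\<^sub>R Sig"]) (simp add: algebra_simps power2_eq_square)
  moreover have "(lam * (trace (A ** Sig) + \<sigma>\<^sup>2) / real S) *\<^sub>R L
      = (lam\<^sup>2 * (trace (A ** Sig) + \<sigma>\<^sup>2) / real S) *\<^sub>R matrix_inv A"
    unfolding L_def by (simp add: power2_eq_square)
  moreover have "fluct_eq \<mu> L A (noise_cov S \<sigma> A Sig) Sig \<longleftrightarrow>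
      (lam * (2 * (1 - \<mu>) - (1 - \<mu>) / (1 + \<mu>) * lam)) *\<^sub>R Sig - (lam\<^sup>2 / real S) *\<^sub>R Sig
      = (lam * (trace (A ** Sig) + \<sigma>\<^sup>2) / real S) *\<^sub>R L"
    unfolding fluct_eq_commuting_iff[OF LA AL] noise_cov_sandwich[OF LA AL]
    by (simp only: diff_eq_eq add.commute)
  ultimately show ?thesis
    by (simp only: L_def)
qed

theorem proposition5:
  fixes A Sig :: "real^'n^'n" and \<mu> lam \<sigma> g :: real and S :: nat
  assumes "spd A"
    and "0 \<le> \<mu>" and "\<mu> < 1"
    and "lam > 0"
    and "S > 0"
    and "g = 2 * (1 - \<mu>) - ((1 - \<mu>) / (1 + \<mu>) + 1 / real S) * lam"
    and "g \<noteq> 0"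
    and "g * real S \<noteq> lam * real CARD('n)"
    and "fluct_eq \<mu> (lam *\<^sub>R matrix_inv A) A (noise_cov S \<sigma> A Sig) Sig"
  shows "Sig = (lam * \<sigma>\<^sup>2 / (g * real S - lam * real CARD('n))) *\<^sub>R matrix_inv A"
proof -
  define t where "t = trace (A ** Sig)"
  define c where "c = lam * (t + \<sigma>\<^sup>2) / (g * real S)"
  have inv: "invertible A"
    using \<open>spd A\<close> by (rule spd_invertible)
  have "(lam * g) *\<^sub>R Sig = (lam\<^sup>2 * (t + \<sigma>\<^sup>2) / real S) *\<^sub>R matrix_inv A"
    using assms(9) unfolding damped_newton_fluct_eq_iff[OF inv] assms(6) t_def .
  moreover have "lam * g \<noteq> 0"
    using assms(4,7) by simp
  ultimately have "Sig = (lam\<^sup>2 * (t + \<sigma>\<^sup>2) / real S / (lam * g)) *\<^sub>R matrix_inv A"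
    by (metis eq_vector_fraction_iff)
  also have "\<dots> = c *\<^sub>R matrix_inv A"
    unfolding c_def using assms(4) by (simp add: power2_eq_square mult.commute)
  finally have Sig: "Sig = c *\<^sub>R matrix_inv A" .
  have "t = c * real CARD('n)"
    unfolding t_def by (subst Sig) (rule trace_mult_scaled_matrix_inv[OF inv])
  then have "c * (g * real S - lam * real CARD('n)) = lam * \<sigma>\<^sup>2"
    unfolding c_def using assms(5,7) by (simp add: field_simps)
  then show ?thesis
    using Sig assms(8) by (simp add: field_simps)
qed

end
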